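(* There is an absolute constant $K>0$ such that the following holds. Let $n\ge2$, $V=\{0,1\}^n$, $\mu$ uniform on $V$, $\beta=\log_2(3/2)$, $\varepsilon>0$, and let $(A,B,W)$ be a partition of $V$ with $(1-\varepsilon)/4\le\mu(A)\le(1+\varepsilon)/4$, $\mu(W)\le\varepsilon n^{-\beta}$ and $|\nabla(A,B)|<(1+\varepsilon)2\cdot 2^{n-2}$. Then \[ |\{x\in A: h_{AB}(x)\neq 2\}|\le K\varepsilon |A| . \]
   Context: $V=\{0,1\}^n$ is the vertex set of the Hamming cube $Q_n$. $d_T(x)$ is the number of neighbors of $x$ in $T$. For disjoint $A,B$, $h_{AB}(x)=d_B(x)$ if $x\in A$ and $h_{AB}(x)=0$ otherwise. $\nabla(A,B)$ is the set of adjacent pairs $(x,y)$ with $x\in A$, $y\in B$. *)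

theory Defs
  imports Complex_Main
begin

definition cube :: "nat \<Rightarrow> bool list set" where
  "cube n = {x. length x = n}"

definition adj :: "bool list \<Rightarrow> bool list \<Rightarrow> bool" where
  "adj x y \<longleftrightarrow> length x = length y \<and> card {i. i < length x \<and> x ! i \<noteq> y ! i} = 1"

definition deg_in :: "bool list set \<Rightarrow> bool list \<Rightarrow> nat" where
  "deg_in T x = card {y \<in> T. adj x y}"

definition h_AB :: "bool list set \<Rightarrow> bool list set \<Rightarrow> bool list \<Rightarrow> nat" where
  "h_AB A B x = (if x \<in> A then deg_in B x else 0)"

definition nabla :: "bool list set \<Rightarrow> bool list set \<Rightarrow> (bool list \<times> bool list) set" where
  "nabla A B = {(x, y). x \<in> A \<and> y \<in> B \<and> adj x y}"

definition mu :: "nat \<Rightarrow> bool list set \<Rightarrow> real" where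
  "mu n S = real (card (S \<inter> cube n)) / 2 ^ n"

end

theory Submission
  imports Defs
begin

text \<open>
Let \<open>\<psi>\<close> be the concave sequence \<open>\<psi>(0) = 0\<close>, \<open>\<psi>(1) = 1\<close>, \<open>\<psi>(2) = 3/2\<close>,
\<open>\<psi>(h+1) = \<psi>(h) + 2/(3\<psi>(h))\<close>.  For every \<open>S \<subseteq> {0,1}\<^sup>n\<close> the sum over \<open>x \<in> S\<close> of
\<open>\<psi>\<close>(number of neighbours of \<open>x\<close> outside \<open>S\<close>) is at least \<open>2|S|(2\<^sup>n - |S|)/2\<^sup>n\<close>;
this follows by induction on \<open>n\<close>, splitting \<open>S\<close> along the first coordinate and using the
concavity of \<open>\<psi>\<close>.  For \<open>S = A \<union> W\<close> a vertex \<open>x \<in> A\<close> contributes \<open>\<psi>(d\<^sub>B(x))\<close>, while the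
vertices of \<open>W\<close> contribute at most \<open>\<surd>(2n)\<close> each, which is negligible because
\<open>\<mu>(W) \<le> \<epsilon> n\<^sup>-\<^sup>\<beta>\<close> with \<open>\<beta> \<ge> 1/2\<close>.  On the other hand \<open>\<psi>(h) \<le> 27/50 + 12/25 h\<close>, with a gap of
at least \<open>1/100\<close> unless \<open>h = 2\<close>, so the same sum is at most
\<open>27/50 |A| + 12/25 |\<nabla>(A,B)|\<close> minus \<open>1/100\<close> per vertex with \<open>h\<^sub>A\<^sub>B \<noteq> 2\<close>.  For
\<open>\<mu>(A) \<approx> 1/4\<close> and \<open>|\<nabla>(A,B)| \<approx> 2\<^sup>n/2\<close> the two bounds agree up to \<open>O(\<epsilon>) 2\<^sup>n\<close>, which bounds
the number of such vertices.
\<close>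

section \<open>The sequence \<open>psi\<close>\<close>

fun psi :: "nat \<Rightarrow> real" where
  "psi 0 = 0"
| "psi (Suc 0) = 1"
| "psi (Suc (Suc 0)) = 3/2"
| "psi (Suc (Suc (Suc k))) = psi (Suc (Suc k)) + (2/3) / psi (Suc (Suc k))"

declare psi.simps(4) [simp del]

lemma psi_ge_3_2: "2 \<le> h \<Longrightarrow> 3/2 \<le> psi h"
proof (induction h rule: dec_induct)
  case (step h)
  then obtain k where "h = Suc (Suc k)" using le_iff_add by (metis add_2_eq_Suc)
  with step show ?case by (simp add: psi.simps(4) add_increasing2)
qed (simp add: numeral_2_eq_2)

lemma psi_rec: "2 \<le> h \<Longrightarrow> psi (Suc h) = psi h + (2/3) / psi h"
  by (cases h rule: psi.cases) (simp_all add: psi.simps(4))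

lemma psi_cases:
  obtains "h = 0" | "h = 1" | "2 \<le> h" "3/2 \<le> psi h" "psi (Suc h) = psi h + (2/3) / psi h"
  using psi_ge_3_2 psi_rec by (metis One_nat_def less_2_cases not_less)

lemma psi_increasing: "incseq psi"
proof (rule incseq_SucI)
  fix h
  show "psi h \<le> psi (Suc h)"
  proof (cases h rule: psi_cases)
    case 3
    then have "0 \<le> (2/3) / psi h" by simp
    with 3 show ?thesis by simp
  qed simp_all
qed

lemma psi_nonneg: "0 \<le> psi h"
  using incseqD[OF psi_increasing, of 0 h] by simp

lemma psi_increment_decreasing: "decseq (\<lambda>h. psi (Suc h) - psi h)"
proof (rule decseq_SucI)
  fix h
  show "psi (Suc (Suc h)) - psi (Suc h) \<le> psi (Suc h) - psi h"
  proof (cases h rule: psi_cases)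
    case 3
    have "(2/3) / psi (Suc h) \<le> (2/3) / psi h"
      using 3 incseq_SucD[OF psi_increasing, of h] by (intro frac_le) auto
    with 3 show ?thesis using psi_rec[of "Suc h"] by simp
  qed (simp_all add: psi.simps(4))
qed

lemma psi_concave:
  assumes "a \<le> b"
  shows "psi (b + k) - psi b \<le> psi (a + k) - psi a"
proof (induction k)
  case (Suc k)
  have "psi (Suc (b + k)) - psi (b + k) \<le> psi (Suc (a + k)) - psi (a + k)"
    using assms by (intro decseqD[OF psi_increment_decreasing, of "a + k" "b + k"]) simp
  with Suc show ?case by simp
qed simp

lemma psi_majorization:
  assumes "l \<le> h\<^sub>0" "l \<le> h\<^sub>1" "h\<^sub>0 + h\<^sub>1 = l + u"
  shows "psi l + psi u \<le> psi h\<^sub>0 + psi h\<^sub>1"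
  using psi_concave[of l h\<^sub>1 "h\<^sub>0 - l"] assms by (simp add: add.commute)

(* The recurrence for psi is chosen to make this hold for every h: one more boundary edge gains c
   at the price of the factor 1 - c\<^sup>2/2, which is what two_point_inequality can pay for. *)
lemma psi_increment_lower:
  fixes c :: real
  assumes "0 \<le> c" "c \<le> 1"
  shows "c + (1 - c\<^sup>2 / 2) * psi h \<le> psi (Suc h)"
proof (cases h rule: psi_cases)
  case 2
  have "0 \<le> (1 - c)\<^sup>2" by simp
  with 2 show ?thesis by (simp add: power2_eq_square algebra_simps)
next
  case 3
  let ?p = "psi h"
  have "0 \<le> (c * ?p - 1)\<^sup>2" by simp
  then have "c * ?p \<le> c\<^sup>2 / 2 * ?p * ?p + 2/3"
    by (simp add: power2_eq_square algebra_simps)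
  also have "\<dots> = (c\<^sup>2 / 2 * ?p + (2/3) / ?p) * ?p"
    using 3 by (simp add: field_simps)
  finally have "c \<le> c\<^sup>2 / 2 * ?p + (2/3) / ?p"
    using 3 by (simp add: mult_le_cancel_right_pos)
  with 3 show ?thesis by (simp add: algebra_simps)
qed (use assms in simp)

lemma psi_square_le: "psi h * psi h \<le> 2 * real h"
proof (induction h)
  case (Suc h)
  show ?case
  proof (cases h rule: psi_cases)
    case 3
    let ?p = "psi h"
    have "(2/3) / ?p \<le> 4/9" using 3 by (simp add: divide_simps)
    with 3 have "((2/3) / ?p) * ((2/3) / ?p) \<le> 4/9 * (4/9)" by (intro mult_mono) auto
    moreover have "(?p + (2/3) / ?p) * (?p + (2/3) / ?p) = ?p * ?p + 4/3 + ((2/3) / ?p) * ((2/3) / ?p)"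
      using 3 by (simp add: algebra_simps)
    ultimately show ?thesis using Suc 3 by simp
  qed simp_all
qed simp

lemma psi_le_affine:
  assumes "2 \<le> h"
  shows "psi h \<le> 4/9 * real h + 11/18"
  using assms
proof (induction h rule: dec_induct)
  case (step h)
  have "psi (Suc h) - psi h \<le> psi 3 - psi 2"
    using step decseqD[OF psi_increment_decreasing, of 2 h] by (simp add: numeral_3_eq_3)
  also have "\<dots> = 4/9" by (simp add: numeral_3_eq_3 numeral_2_eq_2 psi.simps(4))
  finally show ?case using step.IH by (simp add: ring_distribs)
qed (simp add: numeral_2_eq_2)

lemma psi_le_linear: "psi h + of_bool (h \<noteq> 2) / 100 \<le> 27/50 + 12/25 * real h"
proof -
  consider "h = 0" | "h = 1" | "h = 2" | "3 \<le> h" by linarith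
  then show ?thesis
  proof cases
    case 4
    then have "psi h + 1/100 \<le> 27/50 + 12/25 * real h"
      using psi_le_affine[of h] by simp
    with 4 show ?thesis by simp
  qed (simp_all add: numeral_2_eq_2)
qed

section \<open>Neighbourhoods in the cube\<close>

lemma finite_cube: "finite (cube n)"
  using finite_lists_length_eq[of "UNIV :: bool set" n] by (simp add: cube_def)

lemma card_cube: "card (cube n) = 2 ^ n"
  using card_lists_length_eq[of "UNIV :: bool set" n] by (simp add: cube_def)

lemma mu_eq_card: "S \<subseteq> cube n \<Longrightarrow> mu n S = real (card S) / 2 ^ n"
  by (simp add: mu_def Int_absorb2)

definition flip :: "bool list \<Rightarrow> nat \<Rightarrow> bool list" where
  "flip x i = x[i := \<not> x ! i]"

lemma length_flip [simp]: "length (flip x i) = length x"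
  by (simp add: flip_def)

lemma nth_flip: "j < length x \<Longrightarrow> flip x i ! j = (if j = i then \<not> x ! i else x ! j)"
  by (simp add: flip_def nth_list_update)

lemma adj_iff_flip: "adj x y \<longleftrightarrow> (\<exists>i<length x. y = flip x i)"
proof
  assume adj: "adj x y"
  then have "card {j. j < length x \<and> x ! j \<noteq> y ! j} = 1"
    unfolding adj_def by blast
  then obtain i where i: "{j. j < length x \<and> x ! j \<noteq> y ! j} = {i}"
    by (rule card_1_singletonE)
  have "y = flip x i"
    using adj i by (intro nth_equalityI) (auto simp: adj_def nth_flip)
  with i show "\<exists>i<length x. y = flip x i" by auto
next
  assume "\<exists>i<length x. y = flip x i"
  then obtain i where "i < length x" "y = flip x i" by blast
  then have "{j. j < length x \<and> x ! j \<noteq> y ! j} = {i}" by (auto simp: nth_flip split: if_splits)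
  then show "adj x y" by (simp add: adj_def \<open>y = flip x i\<close>)
qed

lemma inj_on_flip: "inj_on (flip x) {..<length x}"
  by (rule inj_onI) (metis lessThan_iff nth_flip)

lemma deg_in_eq_card_flip: "deg_in B x = card {i. i < length x \<and> flip x i \<in> B}"
proof -
  have "{y \<in> B. adj x y} = flip x ` {i. i < length x \<and> flip x i \<in> B}"
    by (auto simp: adj_iff_flip)
  moreover have "inj_on (flip x) {i. i < length x \<and> flip x i \<in> B}"
    by (rule inj_on_subset[OF inj_on_flip]) auto
  ultimately show ?thesis unfolding deg_in_def by (simp add: card_image)
qed

lemma card_nabla:
  assumes "finite A" "finite B"
  shows "card (nabla A B) = (\<Sum>x\<in>A. deg_in B x)"
proof -
  have "nabla A B = Sigma A (\<lambda>x. {y \<in> B. adj x y})" by (auto simp: nabla_def)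
  then show ?thesis using assms by (simp add: card_SigmaI deg_in_def)
qed

definition boundary_deg :: "bool list set \<Rightarrow> bool list \<Rightarrow> nat" where
  "boundary_deg S x = (\<Sum>i<length x. of_bool (flip x i \<notin> S))"

lemma boundary_deg_le_length: "boundary_deg S x \<le> length x"
  using sum_mono[of "{..<length x}" "\<lambda>i. of_bool (flip x i \<notin> S) :: nat" "\<lambda>_. 1"]
  by (simp add: boundary_deg_def)

lemma boundary_deg_antimono: "T \<subseteq> S \<Longrightarrow> boundary_deg S x \<le> boundary_deg T x"
  unfolding boundary_deg_def by (intro sum_mono) auto

lemma boundary_deg_Int_Un:
  "boundary_deg (S \<inter> T) x + boundary_deg (S \<union> T) x = boundary_deg S x + boundary_deg T x"
  unfolding boundary_deg_def sum.distrib[symmetric] by (intro sum.cong) auto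

lemma boundary_deg_Cons:
  "boundary_deg S (b # x) = of_bool ((\<not> b) # x \<notin> S) + boundary_deg {y. b # y \<in> S} x"
  unfolding boundary_deg_def by (simp only: length_Cons sum.lessThan_Suc_shift) (simp add: flip_def)

lemma boundary_deg_eq_deg_in:
  assumes "A \<union> B \<union> W = cube n" "B \<inter> (A \<union> W) = {}" "x \<in> cube n"
  shows "boundary_deg (A \<union> W) x = deg_in B x"
proof -
  have "flip x i \<notin> A \<union> W \<longleftrightarrow> flip x i \<in> B" for i
    using assms by (auto simp: cube_def)
  then show ?thesis
    by (simp add: boundary_deg_def deg_in_eq_card_flip Int_def)
qed

lemma cube_Suc_split:
  assumes "S \<subseteq> cube (Suc n)"
  shows "S = Cons False ` {y. False # y \<in> S} \<union> Cons True ` {y. True # y \<in> S}"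
proof (intro equalityI subsetI)
  fix z assume "z \<in> S"
  moreover from this obtain b y where "z = b # y"
    using assms by (cases z) (auto simp: cube_def)
  ultimately show "z \<in> Cons False ` {y. False # y \<in> S} \<union> Cons True ` {y. True # y \<in> S}"
    by (cases b) auto
qed auto

section \<open>A \<open>psi\<close>-weighted edge-isoperimetric inequality\<close>

definition psi_boundary :: "bool list set \<Rightarrow> real" where
  "psi_boundary S = (\<Sum>x\<in>S. psi (boundary_deg S x))"

lemma psi_boundary_nonneg: "0 \<le> psi_boundary S"
  unfolding psi_boundary_def by (intro sum_nonneg psi_nonneg)

lemma two_point_inequality:
  fixes x y :: real
  assumes "0 \<le> y" "y \<le> x" "x \<le> 1"
  defines "c \<equiv> min 1 (2 * (x - y))"
  shows "(x + y) * (2 - x - y) \<le> 2 * y * (1 - y) + 2 * (1 - c\<^sup>2 / 2) * x * (1 - x) + (x - y) * c"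
proof -
  define d where "d = x - y"
  have "(x + y) * (2 - x - y) - (2 * y * (1 - y) + 2 * (1 - c\<^sup>2 / 2) * x * (1 - x) + (x - y) * c)
      = d\<^sup>2 + c\<^sup>2 * x * (1 - x) - d * c"
    by (simp add: d_def power2_eq_square algebra_simps)
  also have "\<dots> \<le> 0"
  proof (cases "2 * d \<le> 1")
    case True
    then have "d\<^sup>2 + c\<^sup>2 * x * (1 - x) - d * c = - (d * (2 * x - 1))\<^sup>2"
      by (simp add: c_def d_def power2_eq_square algebra_simps)
    then show ?thesis by simp
  next
    case False
    then have "d\<^sup>2 + c\<^sup>2 * x * (1 - x) - d * c = - ((x - d) * (x + d - 1))"
      by (simp add: c_def d_def power2_eq_square algebra_simps)
    moreover have "0 \<le> (x - d) * (x + d - 1)"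
      using False assms by (intro mult_nonneg_nonneg) (auto simp: d_def)
    ultimately show ?thesis by simp
  qed
  finally show ?thesis by simp
qed

lemma two_point_inequality_scaled:
  fixes a b M :: real
  assumes "0 \<le> a" "a \<le> b" "b \<le> M" "0 < M"
  defines "c \<equiv> min 1 (2 * (b - a) / M)"
  shows "(a + b) * (2 * M - (a + b)) / M
         \<le> 2 * a * (M - a) / M + (1 - c\<^sup>2 / 2) * (2 * b * (M - b) / M) + (b - a) * c"
proof -
  have "c = min 1 (2 * (b / M - a / M))"
    by (simp add: c_def diff_divide_distrib)
  then have "(b / M + a / M) * (2 - b / M - a / M)
      \<le> 2 * (a / M) * (1 - a / M) + 2 * (1 - c\<^sup>2 / 2) * (b / M) * (1 - b / M) + (b / M - a / M) * c"
    using two_point_inequality[of "a / M" "b / M"] assms by (auto simp: divide_right_mono)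
  from mult_left_mono[OF this, of M]
  have "M * ((b / M + a / M) * (2 - b / M - a / M))
      \<le> M * (2 * (a / M) * (1 - a / M) + 2 * (1 - c\<^sup>2 / 2) * (b / M) * (1 - b / M) + (b / M - a / M) * c)"
    using assms(4) by simp
  moreover have "M * ((b / M + a / M) * (2 - b / M - a / M)) = (a + b) * (2 * M - (a + b)) / M"
    using assms(4) by (simp add: field_simps)
  moreover have "M * (2 * (a / M) * (1 - a / M) + 2 * (1 - c\<^sup>2 / 2) * (b / M) * (1 - b / M) + (b / M - a / M) * c)
      = 2 * a * (M - a) / M + (1 - c\<^sup>2 / 2) * (2 * b * (M - b) / M) + (b - a) * c"
    using assms(4) by (simp add: field_simps)
  ultimately show ?thesis by simp
qed

lemma psi_two_sections:
  assumes "p \<or> q" "l \<le> h\<^sub>0" "l \<le> h\<^sub>1" "h\<^sub>0 + h\<^sub>1 = l + u"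
  shows "(if p \<and> q then psi u else 0) + psi (l + of_bool (\<not> (p \<and> q)))
         \<le> (if p then psi (of_bool (\<not> q) + h\<^sub>0) else 0) + (if q then psi (of_bool (\<not> p) + h\<^sub>1) else 0)"
  using assms psi_majorization[of l h\<^sub>0 h\<^sub>1 u]
    monoD[OF psi_increasing, of "l + 1" "1 + h\<^sub>0"] monoD[OF psi_increasing, of "l + 1" "1 + h\<^sub>1"]
  by (cases p; cases q) (simp_all add: add.commute)

lemma psi_boundary_Cons_split:
  assumes "finite S\<^sub>0" "finite S\<^sub>1"
  shows "psi_boundary (S\<^sub>0 \<inter> S\<^sub>1)
           + (\<Sum>y\<in>S\<^sub>0 \<union> S\<^sub>1. psi (boundary_deg (S\<^sub>0 \<union> S\<^sub>1) y + of_bool (y \<notin> S\<^sub>0 \<inter> S\<^sub>1)))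
         \<le> psi_boundary (Cons False ` S\<^sub>0 \<union> Cons True ` S\<^sub>1)"
    (is "psi_boundary ?I + (\<Sum>y\<in>?U. ?f y) \<le> psi_boundary ?S")
proof -
  let ?h = "\<lambda>b y. boundary_deg ?S (b # y)"
  have restrict: "(\<Sum>y\<in>?U. if y \<in> X then g y else 0) = sum g X" if "X \<subseteq> ?U" for X g
    using sum.inter_restrict[of ?U g X] assms that by (simp add: Int_absorb1)
  have h_False: "?h False y = of_bool (y \<notin> S\<^sub>1) + boundary_deg S\<^sub>0 y" for y
    by (simp add: boundary_deg_Cons image_iff)
  have h_True: "?h True y = of_bool (y \<notin> S\<^sub>0) + boundary_deg S\<^sub>1 y" for y
    by (simp add: boundary_deg_Cons image_iff)
  have pointwise: "(if y \<in> ?I then psi (boundary_deg ?I y) else 0) + ?f y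
      \<le> (if y \<in> S\<^sub>0 then psi (?h False y) else 0) + (if y \<in> S\<^sub>1 then psi (?h True y) else 0)"
    if "y \<in> ?U" for y
  proof -
    have mem: "y \<in> S\<^sub>0 \<or> y \<in> S\<^sub>1" using that by blast
    have le: "boundary_deg ?U y \<le> boundary_deg S\<^sub>0 y" "boundary_deg ?U y \<le> boundary_deg S\<^sub>1 y"
      by (intro boundary_deg_antimono; blast)+
    have sum: "boundary_deg S\<^sub>0 y + boundary_deg S\<^sub>1 y = boundary_deg ?U y + boundary_deg ?I y"
      using boundary_deg_Int_Un[of S\<^sub>0 S\<^sub>1 y] by simp
    show ?thesis
      using psi_two_sections[OF mem le sum] by (simp add: h_False h_True split: if_splits)
  qed
  have "psi_boundary ?I + (\<Sum>y\<in>?U. ?f y)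
      = (\<Sum>y\<in>?U. (if y \<in> ?I then psi (boundary_deg ?I y) else 0) + ?f y)"
    using restrict[of ?I "\<lambda>y. psi (boundary_deg ?I y)"] by (simp add: psi_boundary_def sum.distrib le_supI1)
  also have "\<dots> \<le> (\<Sum>y\<in>?U. (if y \<in> S\<^sub>0 then psi (?h False y) else 0)
                          + (if y \<in> S\<^sub>1 then psi (?h True y) else 0))"
    by (intro sum_mono pointwise)
  also have "\<dots> = (\<Sum>y\<in>S\<^sub>0. psi (?h False y)) + (\<Sum>y\<in>S\<^sub>1. psi (?h True y))"
    by (simp add: sum.distrib restrict)
  also have "\<dots> = psi_boundary ?S"
    using assms unfolding psi_boundary_def
    by (subst sum.union_disjoint) (auto simp: sum.reindex)
  finally show ?thesis .
qed

lemma psi_boundary_shift_lower: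
  fixes c :: real
  assumes "finite U" "I \<subseteq> U" "0 \<le> c" "c \<le> 1"
  shows "(1 - c\<^sup>2 / 2) * psi_boundary U + real (card (U - I)) * c
         \<le> (\<Sum>y\<in>U. psi (boundary_deg U y + of_bool (y \<notin> I)))"
proof -
  have "real (card (U - I)) * c = (\<Sum>y\<in>U. of_bool (y \<notin> I) * c)"
    using assms(1) by (simp add: set_diff_eq Int_def)
  then have "(1 - c\<^sup>2 / 2) * psi_boundary U + real (card (U - I)) * c
      = (\<Sum>y\<in>U. (1 - c\<^sup>2 / 2) * psi (boundary_deg U y) + of_bool (y \<notin> I) * c)"
    by (simp add: psi_boundary_def sum.distrib sum_distrib_left)
  also have "\<dots> \<le> (\<Sum>y\<in>U. psi (boundary_deg U y + of_bool (y \<notin> I)))"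
  proof (intro sum_mono)
    fix y
    show "(1 - c\<^sup>2 / 2) * psi (boundary_deg U y) + of_bool (y \<notin> I) * c
        \<le> psi (boundary_deg U y + of_bool (y \<notin> I))"
    proof (cases "y \<in> I")
      case True
      have "(1 - c\<^sup>2 / 2) * psi (boundary_deg U y) \<le> 1 * psi (boundary_deg U y)"
        using psi_nonneg assms(3) by (intro mult_right_mono) auto
      with True show ?thesis by simp
    next
      case False
      then show ?thesis using psi_increment_lower[OF assms(3,4)] by (simp add: add.commute)
    qed
  qed
  finally show ?thesis .
qed

lemma psi_boundary_Cons_lower:
  fixes c :: real
  assumes "finite S\<^sub>0" "finite S\<^sub>1" "0 \<le> c" "c \<le> 1"
  shows "psi_boundary (S\<^sub>0 \<inter> S\<^sub>1) + (1 - c\<^sup>2 / 2) * psi_boundary (S\<^sub>0 \<union> S\<^sub>1)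
           + real (card ((S\<^sub>0 \<union> S\<^sub>1) - (S\<^sub>0 \<inter> S\<^sub>1))) * c
         \<le> psi_boundary (Cons False ` S\<^sub>0 \<union> Cons True ` S\<^sub>1)"
proof -
  have "finite (S\<^sub>0 \<union> S\<^sub>1)" "S\<^sub>0 \<inter> S\<^sub>1 \<subseteq> S\<^sub>0 \<union> S\<^sub>1"
    using assms by auto
  from psi_boundary_shift_lower[OF this assms(3,4)] psi_boundary_Cons_split[OF assms(1,2)]
  show ?thesis by linarith
qed

theorem psi_boundary_lower_bound:
  "S \<subseteq> cube n \<Longrightarrow> 2 * real (card S) * (2 ^ n - real (card S)) / 2 ^ n \<le> psi_boundary S"
proof (induction n arbitrary: S)
  case 0
  then have "S = {} \<or> S = {[]}" by (auto simp: cube_def)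
  then show ?case using psi_boundary_nonneg[of S] by auto
next
  case (Suc n S)
  define S\<^sub>0 where "S\<^sub>0 = {y. False # y \<in> S}"
  define S\<^sub>1 where "S\<^sub>1 = {y. True # y \<in> S}"
  define I where "I = S\<^sub>0 \<inter> S\<^sub>1"
  define U where "U = S\<^sub>0 \<union> S\<^sub>1"
  have S_eq: "S = Cons False ` S\<^sub>0 \<union> Cons True ` S\<^sub>1"
    unfolding S\<^sub>0_def S\<^sub>1_def using Suc.prems by (rule cube_Suc_split)
  have "S\<^sub>0 \<subseteq> cube n" "S\<^sub>1 \<subseteq> cube n"
    using Suc.prems by (auto simp: S\<^sub>0_def S\<^sub>1_def cube_def)
  then have IU: "I \<subseteq> U" "I \<subseteq> cube n" "U \<subseteq> cube n"
    and fin: "finite S\<^sub>0" "finite S\<^sub>1" "finite I" "finite U"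
    by (auto simp: I_def U_def intro: finite_subset[OF _ finite_cube])
  define M :: real where "M = 2 ^ n"
  define a where "a = real (card I)"
  define b where "b = real (card U)"
  define c where "c = min 1 (2 * (b - a) / M)"
  have M: "0 < M" by (simp add: M_def)
  have ab: "0 \<le> a" "a \<le> b" "real (card (U - I)) = b - a" and bM: "b \<le> M"
    using card_mono[OF _ IU(1)] card_Diff_subset[OF _ IU(1)] card_mono[OF finite_cube IU(3)] fin
    by (auto simp: a_def b_def M_def card_cube of_nat_diff)
  have c: "0 \<le> c" "c \<le> 1"
    using ab M by (auto simp: c_def)
  then have "c\<^sup>2 \<le> 1" by (simp add: power_le_one)
  have card_S: "real (card S) = a + b"
    using card_Un_Int[OF fin(1,2)] fin unfolding S_eq a_def b_def I_def U_def
    by (subst card_Un_disjoint) (auto simp: card_image)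
  have "2 * real (card S) * (2 ^ Suc n - real (card S)) / 2 ^ Suc n = (a + b) * (2 * M - (a + b)) / M"
    using M by (simp add: card_S M_def field_simps)
  also have "\<dots> \<le> 2 * a * (M - a) / M + (1 - c\<^sup>2 / 2) * (2 * b * (M - b) / M) + (b - a) * c"
    unfolding c_def by (rule two_point_inequality_scaled[OF ab(1,2) bM M])
  also have "\<dots> \<le> psi_boundary I + (1 - c\<^sup>2 / 2) * psi_boundary U + real (card (U - I)) * c"
    using Suc.IH[OF IU(2)] Suc.IH[OF IU(3)] \<open>c\<^sup>2 \<le> 1\<close> ab
    by (intro add_mono mult_left_mono) (auto simp: a_def b_def M_def)
  also have "\<dots> \<le> psi_boundary S"
    unfolding S_eq I_def U_def using fin(1,2) c by (rule psi_boundary_Cons_lower)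
  finally show ?case .
qed

lemma psi_boundary_lower_bound_mu:
  assumes "S \<subseteq> cube n"
  shows "2 * mu n S * (1 - mu n S) \<le> psi_boundary S / 2 ^ n"
proof -
  have "2 * mu n S * (1 - mu n S) = 2 * real (card S) * (2 ^ n - real (card S)) / 2 ^ n / 2 ^ n"
    using assms by (simp add: mu_def Int_absorb2 field_simps)
  also have "\<dots> \<le> psi_boundary S / 2 ^ n"
    using divide_right_mono[OF psi_boundary_lower_bound[OF assms], of "2 ^ n"] by simp
  finally show ?thesis .
qed

section \<open>Counting the vertices of \<open>A\<close> with \<open>h\<^sub>A\<^sub>B \<noteq> 2\<close>\<close>

lemma sum_psi_le_linear:
  assumes "finite A"
  shows "(\<Sum>x\<in>A. psi (f x)) + real (card {x \<in> A. f x \<noteq> 2}) / 100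
         \<le> 27/50 * real (card A) + 12/25 * (\<Sum>x\<in>A. real (f x))"
proof -
  have "real (card {x \<in> A. f x \<noteq> 2}) / 100 = (\<Sum>x\<in>A. of_bool (f x \<noteq> 2) / 100)"
    using assms by (simp add: sum_divide_distrib[symmetric] Int_def)
  then have "(\<Sum>x\<in>A. psi (f x)) + real (card {x \<in> A. f x \<noteq> 2}) / 100
      = (\<Sum>x\<in>A. psi (f x) + of_bool (f x \<noteq> 2) / 100)"
    by (simp add: sum.distrib)
  also have "\<dots> \<le> (\<Sum>x\<in>A. 27/50 + 12/25 * real (f x))"
    by (intro sum_mono psi_le_linear)
  finally show ?thesis by (simp add: sum.distrib sum_distrib_left)
qed

lemma psi_boundary_partition_le:
  assumes "A \<union> B \<union> W = cube n" "A \<inter> B = {}" "A \<inter> W = {}" "B \<inter> W = {}"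
  shows "psi_boundary (A \<union> W) \<le> (\<Sum>x\<in>A. psi (deg_in B x)) + real (card W) * sqrt (2 * real n)"
proof -
  have "A \<subseteq> cube n" "W \<subseteq> cube n" using assms(1) by blast+
  then have fin: "finite A" "finite W" using finite_subset[OF _ finite_cube] by blast+
  have disj: "B \<inter> (A \<union> W) = {}" using assms(2,4) by blast
  have "boundary_deg (A \<union> W) x = deg_in B x" if "x \<in> A" for x
  proof -
    have "x \<in> cube n" using that assms(1) by blast
    then show ?thesis by (rule boundary_deg_eq_deg_in[OF assms(1) disj])
  qed
  then have "(\<Sum>x\<in>A. psi (boundary_deg (A \<union> W) x)) = (\<Sum>x\<in>A. psi (deg_in B x))"
    by simp
  moreover have "psi (boundary_deg (A \<union> W) x) \<le> sqrt (2 * real n)" if "x \<in> W" for x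
  proof -
    have "x \<in> cube n" using that assms(1) by blast
    then have "boundary_deg (A \<union> W) x \<le> n"
      using boundary_deg_le_length[of "A \<union> W" x] by (simp add: cube_def)
    then have "psi (boundary_deg (A \<union> W) x) * psi (boundary_deg (A \<union> W) x) \<le> 2 * real n"
      using psi_square_le[of "boundary_deg (A \<union> W) x"] by simp
    then show ?thesis by (intro real_le_rsqrt) (simp add: power2_eq_square)
  qed
  then have "(\<Sum>x\<in>W. psi (boundary_deg (A \<union> W) x)) \<le> real (card W) * sqrt (2 * real n)"
    using sum_mono[of W "\<lambda>x. psi (boundary_deg (A \<union> W) x)" "\<lambda>_. sqrt (2 * real n)"] by simp
  ultimately show ?thesis
    unfolding psi_boundary_def using fin assms(3) by (simp add: sum.union_disjoint)
qed

lemma log_3_2_ge_half: "1/2 \<le> log 2 (3/2)"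
proof -
  have "(2 powr (1/2::real))\<^sup>2 \<le> (3/2)\<^sup>2"
    by (simp add: powr_half_sqrt power2_eq_square)
  then have "2 powr (1/2::real) \<le> 3/2" by (rule power2_le_imp_le) simp
  then show ?thesis by (subst le_log_iff) auto
qed

lemma powr_neg_mult_sqrt_le:
  fixes x \<beta> :: real
  assumes "1/2 \<le> \<beta>" "1 \<le> x"
  shows "x powr (- \<beta>) * sqrt (2 * x) \<le> sqrt 2"
proof -
  have "x powr (- \<beta>) \<le> x powr (- (1/2))"
    using assms by (intro powr_mono) auto
  also have "\<dots> = 1 / sqrt x"
    using assms by (simp add: powr_minus_divide powr_half_sqrt)
  finally have "x powr (- \<beta>) * sqrt (2 * x) \<le> 1 / sqrt x * sqrt (2 * x)"
    using assms by (intro mult_right_mono) auto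
  also have "\<dots> = sqrt 2"
    using assms by (simp add: real_sqrt_mult)
  finally show ?thesis .
qed

(* Since 27/50 * 1/4 + 12/25 * 1/2 = 3/8 = 2 * 1/4 * 3/4, the constant terms of the two bounds
   cancel and only O(\<epsilon>) is left for the 1/100 gaps. *)
lemma bad_fraction_arith:
  fixes \<epsilon> a w g p q :: real
  assumes "0 < \<epsilon>" "\<epsilon> \<le> 1/10" "1 - \<epsilon> \<le> 4 * a" "4 * a \<le> 1 + \<epsilon>" "0 \<le> w" "w \<le> \<epsilon>"
    and "2 * g < 1 + \<epsilon>"
    and upper: "p + q / 100 \<le> 27/50 * a + 12/25 * g"
    and lower: "2 * (a + w) * (1 - (a + w)) \<le> p + 2 * \<epsilon>"
  shows "q \<le> 1500 * \<epsilon> * a"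
proof -
  define t where "t = a + w - 1/4"
  have t: "- \<epsilon> / 4 \<le> t" "t \<le> 5 * \<epsilon> / 4" "t \<le> 1/8"
    using assms by (auto simp: t_def)
  have "2 * (a + w) * (1 - (a + w)) = 3/8 + t - 2 * t\<^sup>2"
    by (simp add: t_def power2_eq_square algebra_simps)
  moreover have "- \<epsilon> \<le> t - 2 * t\<^sup>2"
  proof (cases "0 \<le> t")
    case True
    then have "t\<^sup>2 \<le> t / 8" using t mult_left_mono[of t "1/8" t] by (simp add: power2_eq_square)
    with True assms(1) show ?thesis by linarith
  next
    case False
    then have "t\<^sup>2 \<le> (\<epsilon> / 4)\<^sup>2" using t power_mono[of "- t" "\<epsilon> / 4" 2] by simp
    moreover have "(\<epsilon> / 4)\<^sup>2 \<le> \<epsilon> / 4"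
      using assms(1,2) mult_right_mono[of "\<epsilon> / 4" 1 "\<epsilon> / 4"] by (simp add: power2_eq_square)
    ultimately show ?thesis using t by linarith
  qed
  ultimately have "q / 100 \<le> 27/8 * \<epsilon>"
    using assms by linarith
  moreover have "1500 * \<epsilon> * (9/40) \<le> 1500 * \<epsilon> * a"
    using assms by (intro mult_left_mono) auto
  ultimately show ?thesis by linarith
qed

lemma sum_psi_deg_in_lower:
  fixes \<epsilon> :: real
  assumes "1 \<le> n" "0 \<le> \<epsilon>"
    and part: "A \<union> B \<union> W = cube n" "A \<inter> B = {}" "A \<inter> W = {}" "B \<inter> W = {}"
    and mu_W: "mu n W \<le> \<epsilon> * real n powr (- log 2 (3/2))"
  shows "2 * (mu n A + mu n W) * (1 - (mu n A + mu n W)) \<le> (\<Sum>x\<in>A. psi (deg_in B x)) / 2 ^ n + 2 * \<epsilon>"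
proof -
  define P where "P = (\<Sum>x\<in>A. psi (deg_in B x))"
  have sub: "A \<subseteq> cube n" "W \<subseteq> cube n" "A \<union> W \<subseteq> cube n"
    using part(1) by blast+
  have "mu n (A \<union> W) = mu n A + mu n W"
    using sub part(3) finite_subset[OF _ finite_cube]
    by (simp add: mu_eq_card card_Un_disjoint add_divide_distrib)
  then have "2 * (mu n A + mu n W) * (1 - (mu n A + mu n W)) \<le> psi_boundary (A \<union> W) / 2 ^ n"
    using psi_boundary_lower_bound_mu[OF sub(3)] by simp
  also have "\<dots> \<le> (P + real (card W) * sqrt (2 * real n)) / 2 ^ n"
    using psi_boundary_partition_le[OF part] by (simp add: P_def divide_right_mono)
  also have "\<dots> = P / 2 ^ n + mu n W * sqrt (2 * real n)"
    using sub(2) by (simp add: mu_eq_card add_divide_distrib)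
  also have "\<dots> \<le> P / 2 ^ n + \<epsilon> * (real n powr (- log 2 (3/2)) * sqrt (2 * real n))"
    using mult_right_mono[OF mu_W, of "sqrt (2 * real n)"] by (simp add: mult.assoc)
  also have "\<dots> \<le> P / 2 ^ n + \<epsilon> * 2"
    using powr_neg_mult_sqrt_le[OF log_3_2_ge_half, of n] sqrt2_less_2 assms(1,2)
    by (intro add_left_mono mult_left_mono) auto
  finally show ?thesis by (simp add: P_def)
qed

lemma sum_psi_deg_in_upper:
  assumes "A \<subseteq> cube n" "finite B"
  shows "(\<Sum>x\<in>A. psi (deg_in B x)) / 2 ^ n + mu n {x \<in> A. deg_in B x \<noteq> 2} / 100
         \<le> 27/50 * mu n A + 12/25 * (real (card (nabla A B)) / 2 ^ n)"
proof -
  have "finite A" using assms(1) finite_subset[OF _ finite_cube] by blast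
  from sum_psi_le_linear[OF this, of "deg_in B"] card_nabla[OF this assms(2)]
  have "(\<Sum>x\<in>A. psi (deg_in B x)) + real (card {x \<in> A. deg_in B x \<noteq> 2}) / 100
      \<le> 27/50 * real (card A) + 12/25 * real (card (nabla A B))"
    by simp
  from divide_right_mono[OF this, of "2 ^ n"] show ?thesis
    using assms(1) by (simp add: mu_eq_card subset_iff add_divide_distrib)
qed

lemma bad_vertices_bound:
  fixes \<epsilon> :: real
  assumes "n \<ge> 2" "0 < \<epsilon>" "\<epsilon> \<le> 1/10"
    and part: "A \<union> B \<union> W = cube n" "A \<inter> B = {}" "A \<inter> W = {}" "B \<inter> W = {}"
    and "(1 - \<epsilon>) / 4 \<le> mu n A" "mu n A \<le> (1 + \<epsilon>) / 4"
    and mu_W: "mu n W \<le> \<epsilon> * real n powr (- log 2 (3/2))"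
    and nabla_lt: "real (card (nabla A B)) < (1 + \<epsilon>) * 2 * 2 ^ (n - 2)"
  shows "real (card {x \<in> A. h_AB A B x \<noteq> 2}) \<le> 1500 * \<epsilon> * real (card A)"
proof -
  define bad where "bad = {x \<in> A. deg_in B x \<noteq> 2}"
  have sub: "A \<subseteq> cube n" "bad \<subseteq> cube n" "B \<subseteq> cube n"
    using part(1) by (auto simp: bad_def)
  have "real n powr (- log 2 (3/2)) \<le> real n powr 0"
    using assms(1) log_3_2_ge_half by (intro powr_mono) auto
  then have "\<epsilon> * real n powr (- log 2 (3/2)) \<le> \<epsilon> * 1"
    using assms(1,2) by (intro mult_left_mono) auto
  with mu_W have "mu n W \<le> \<epsilon>" by simp
  have "(1 + \<epsilon>) * 2 * 2 ^ (n - 2) = (1 + \<epsilon>) * 2 ^ n / 2"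
    using assms(1) by (simp add: power_diff)
  then have edges: "2 * (real (card (nabla A B)) / 2 ^ n) < 1 + \<epsilon>"
    using nabla_lt by (simp add: field_simps)
  have mu_A: "1 - \<epsilon> \<le> 4 * mu n A" "4 * mu n A \<le> 1 + \<epsilon>"
    using assms(8,9) by auto
  have "0 \<le> mu n W" by (simp add: mu_def)
  have "mu n bad \<le> 1500 * \<epsilon> * mu n A"
    using sum_psi_deg_in_upper[OF sub(1) finite_subset[OF sub(3) finite_cube], folded bad_def]
      sum_psi_deg_in_lower[OF _ _ part mu_W] assms(1,2)
    by (intro bad_fraction_arith[OF assms(2,3) mu_A \<open>0 \<le> mu n W\<close> \<open>mu n W \<le> \<epsilon>\<close> edges]) auto
  moreover have "{x \<in> A. h_AB A B x \<noteq> 2} = bad"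
    by (auto simp: bad_def h_AB_def)
  ultimately show ?thesis
    using sub by (simp add: mu_eq_card divide_right_mono field_simps)
qed

theorem mainTheorem11:
  shows "\<exists>K::real. K > 0 \<and>
    (\<forall>(n::nat) (\<epsilon>::real) A B W.
       n \<ge> 2 \<longrightarrow> \<epsilon> > 0 \<longrightarrow>
       A \<union> B \<union> W = cube n \<longrightarrow> A \<inter> B = {} \<longrightarrow> A \<inter> W = {} \<longrightarrow> B \<inter> W = {} \<longrightarrow>
       (1 - \<epsilon>) / 4 \<le> mu n A \<longrightarrow> mu n A \<le> (1 + \<epsilon>) / 4 \<longrightarrow>
       mu n W \<le> \<epsilon> * real n powr (- log 2 (3/2)) \<longrightarrow>
       real (card (nabla A B)) < (1 + \<epsilon>) * 2 * 2 ^ (n - 2) \<longrightarrow>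
       real (card {x \<in> A. h_AB A B x \<noteq> 2}) \<le> K * \<epsilon> * real (card A))"
proof (intro exI[of _ 1500] conjI allI impI)
  fix n :: nat and \<epsilon> :: real and A B W :: "bool list set"
  assume hyps: "n \<ge> 2" "\<epsilon> > 0" "A \<union> B \<union> W = cube n" "A \<inter> B = {}" "A \<inter> W = {}" "B \<inter> W = {}"
    "(1 - \<epsilon>) / 4 \<le> mu n A" "mu n A \<le> (1 + \<epsilon>) / 4"
    "mu n W \<le> \<epsilon> * real n powr (- log 2 (3/2))"
    "real (card (nabla A B)) < (1 + \<epsilon>) * 2 * 2 ^ (n - 2)"
  show "real (card {x \<in> A. h_AB A B x \<noteq> 2}) \<le> 1500 * \<epsilon> * real (card A)"
  proof (cases "\<epsilon> \<le> 1/10")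
    case True
    show ?thesis by (rule bad_vertices_bound[OF hyps(1,2) True hyps(3-10)])
  next
    case False
    have "finite A" using hyps(3) finite_cube by (metis finite_Un)
    then have "real (card {x \<in> A. h_AB A B x \<noteq> 2}) \<le> 1 * real (card A)"
      by (simp add: card_mono)
    also have "\<dots> \<le> 1500 * \<epsilon> * real (card A)"
      using False by (intro mult_right_mono) auto
    finally show ?thesis .
  qed
qed simp

end
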